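(* Fix $n$ and $l\ge1$, let $q=p_{l+1}$, and let $T^*\subseteq T$. Suppose $A^*\subseteq(2n/q,2n]$ is of the form $A^*=\bigcup_{t\in T^*}A_t$, where each $A_t$ is a maximum-size antichain of the poset $L(t)$ (under divisibility). Then $A^*$ can be extended to a primitive set $A$ with $|A|=n$ and $A^*\subseteq A\subseteq (2n/q,2n]\cap\mathbb Z$. Furthermore, the extension can be chosen so that distinct such $A^*$ give distinct $A$ (namely $A\cap\bigcup_{t\in T^*}L(t)=A^*$).
   Context: A set of positive integers is primitive if no element divides another. Let $p_1<p_2<\dots$ be the primes. $M_l$ is the set of positive integers all of whose prime factors lie in $\{p_1,\dots,p_l\}$, and $M_l(x)=\{m\in M_l:m\le x\}$. Let $T=\{t\in\{1,\dots,2n\}:\gcd(t,p_1p_2\cdots p_l)=1\}$, and for $t\in T$ let $L(t)=t\cdot M_l(2n/t)=\{tm: m\in M_l,\ tm\le 2n\}$, ordered by divisibility. *)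

theory Defs
  imports Complex_Main "HOL-Library.Infinite_Set" "HOL-Computational_Algebra.Primes"
begin

text \<open>The k-th prime p_k, 1-indexed: pr 1 = 2, pr 2 = 3, ...\<close>
definition pr :: "nat \<Rightarrow> nat" where
  "pr k = enumerate {p::nat. prime p} (k - 1)"

definition Msmooth :: "nat \<Rightarrow> nat set" where
  "Msmooth l = {m. m > 0 \<and> (\<forall>p. prime p \<and> p dvd m \<longrightarrow> p \<in> pr ` {1..l})}"

definition Tset :: "nat \<Rightarrow> nat \<Rightarrow> nat set" where
  "Tset n l = {t \<in> {1..2*n}. coprime t (\<Prod>i\<in>{1..l}. pr i)}"

text \<open>L(t) = t * M_l(2n/t) = {t m : m in M_l, t m <= 2n}.\<close>
definition Lset :: "nat \<Rightarrow> nat \<Rightarrow> nat \<Rightarrow> nat set" where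
  "Lset n l t = {t * m | m. m \<in> Msmooth l \<and> t * m \<le> 2 * n}"

definition primitive :: "nat set \<Rightarrow> bool" where
  "primitive A \<longleftrightarrow> (\<forall>a\<in>A. \<forall>b\<in>A. a dvd b \<longrightarrow> a = b)"

definition max_antichain :: "nat set \<Rightarrow> nat set \<Rightarrow> bool" where
  "max_antichain S A \<longleftrightarrow> A \<subseteq> S \<and> primitive A \<and>
     (\<forall>B. B \<subseteq> S \<and> primitive B \<longrightarrow> card B \<le> card A)"

end

theory Submission
  imports Defs
begin

text \<open>
  Every element of L(t) is t * m with m smooth, and t is coprime to all smooth numbers, so the
  posets L(t), t \<in> T, are pairwise disjoint. Multiplying by a suitable power of 2 maps any
  antichain of L(t) injectively into the antichain L(t) \<inter> (n, 2n]; hence each A_t has exactly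
  |L(t) \<inter> (n, 2n]| elements and A = A* \<union> ((n, 2n] - \<Union> L(t)) has n elements. For primitivity:
  if a \<in> A_t divides b \<le> 2n, the cofactor b/a is less than q because a > 2n/q, so it is smooth,
  b lies in L(t) and hence in A_t; and a divisor chain starting in (n, 2n] stays in (n, 2n],
  which is primitive.
\<close>

lemma of_nat_divide_less_iff:
  assumes "0 < q"
  shows "real a / real q < real x \<longleftrightarrow> a < x * q"
  using assms by (simp add: pos_divide_less_eq flip: of_nat_mult)

lemma infinite_primes_nat: "infinite {p::nat. prime p}"
  using primes_infinite by blast

lemma prime_pr: "prime (pr k)"
  unfolding pr_def using enumerate_in_set[OF infinite_primes_nat] by blast

lemma pr_1: "pr 1 = 2"
proof -
  have "(LEAST p::nat. prime p) = 2"
    by (rule Least_equality) (auto simp: prime_ge_2_nat)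
  then show ?thesis by (simp add: pr_def enumerate_0)
qed

lemma prime_less_pr_Suc:
  assumes "prime p" "p < pr (l + 1)"
  shows "p \<in> pr ` {1..l}"
proof -
  obtain j where j: "enumerate {p::nat. prime p} j = p"
    using enumerate_Ex[OF infinite_primes_nat] assms(1) by blast
  have "j < l"
  proof (rule ccontr)
    assume "\<not> j < l"
    then have "pr (l + 1) \<le> p"
      using j enumerate_mono_le_iff[OF infinite_primes_nat, of l j] by (simp add: pr_def)
    with assms(2) show False by simp
  qed
  moreover have "p = pr (j + 1)" using j by (simp add: pr_def)
  ultimately show ?thesis by force
qed

lemma Msmooth_mult:
  assumes "a \<in> Msmooth l" "b \<in> Msmooth l"
  shows "a * b \<in> Msmooth l"
  using assms unfolding Msmooth_def by (auto simp: prime_dvd_mult_iff)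

lemma less_pr_Suc_in_Msmooth:
  assumes "0 < k" "k < pr (l + 1)"
  shows "k \<in> Msmooth l"
  unfolding Msmooth_def
proof safe
  fix p assume "prime p" "p dvd k"
  then have "p \<le> k" using assms(1) by (simp add: dvd_imp_le)
  with assms(2) have "p < pr (l + 1)" by simp
  then show "p \<in> pr ` {1..l}" using prime_less_pr_Suc \<open>prime p\<close> by blast
qed (use assms in simp)

lemma power_two_in_Msmooth:
  assumes "l \<ge> 1"
  shows "(2::nat) ^ j \<in> Msmooth l"
  unfolding Msmooth_def
proof safe
  fix p :: nat assume "prime p" "p dvd 2 ^ j"
  then have "p dvd 2" by (rule prime_dvd_power)
  then have "p = 2" using \<open>prime p\<close> by (simp add: primes_dvd_imp_eq)
  then show "p \<in> pr ` {1..l}" using pr_1 assms by force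
qed simp

lemma coprime_Tset_Msmooth:
  assumes "t \<in> Tset n l" "m \<in> Msmooth l"
  shows "coprime t m"
proof (rule ccontr)
  assume "\<not> coprime t m"
  then obtain p where "prime p" "p dvd gcd t m"
    using prime_factor_nat[of "gcd t m"] by (auto simp: coprime_iff_gcd_eq_1)
  then have p: "prime p" "p dvd t" "p dvd m" by auto
  then obtain i where "i \<in> {1..l}" "p = pr i" using assms(2) unfolding Msmooth_def by blast
  then have "p dvd (\<Prod>i\<in>{1..l}. pr i)" by (simp add: dvd_prodI)
  moreover have "coprime t (\<Prod>i\<in>{1..l}. pr i)" using assms(1) by (simp add: Tset_def)
  ultimately have "is_unit p" using p(2) coprime_common_divisor by blast
  with p(1) show False by simp
qed

lemma finite_Tset: "finite (Tset n l)"
  unfolding Tset_def by simp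

lemma Lset_subset: "t \<in> Tset n l \<Longrightarrow> Lset n l t \<subseteq> {1..2*n}"
  by (auto simp: Lset_def Tset_def Msmooth_def)

lemma finite_Lset: "finite (Lset n l t)"
  by (rule finite_subset[of _ "{..2*n}"]) (auto simp: Lset_def)

lemma Lset_disjoint:
  assumes "t \<in> Tset n l" "t' \<in> Tset n l" "t \<noteq> t'"
  shows "Lset n l t \<inter> Lset n l t' = {}"
proof (rule ccontr)
  assume "Lset n l t \<inter> Lset n l t' \<noteq> {}"
  then obtain m m' where m: "m \<in> Msmooth l" "m' \<in> Msmooth l" "t * m = t' * m'"
    unfolding Lset_def by blast
  then have "t dvd t' * m'" "t' dvd t * m" by (metis dvd_triv_left)+
  then have "t dvd t'" "t' dvd t"
    using coprime_Tset_Msmooth assms(1,2) m(1,2) by (simp_all add: coprime_dvd_mult_left_iff)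
  with assms(3) show False by (simp add: dvd_antisym)
qed

lemma mult_Msmooth_in_Lset:
  assumes "x \<in> Lset n l t" "k \<in> Msmooth l" "x * k \<le> 2 * n"
  shows "x * k \<in> Lset n l t"
  using assms Msmooth_mult unfolding Lset_def by (auto simp: mult.assoc)

lemma dvd_in_Lset:
  assumes "a \<in> Lset n l t" "a dvd b" "2 * n < a * pr (l + 1)" "0 < b" "b \<le> 2 * n"
  shows "b \<in> Lset n l t"
proof -
  obtain k where k: "b = a * k" using assms(2) by blast
  with assms(4) have "0 < k" by simp
  moreover have "k < pr (l + 1)"
    using assms(3,5) k by (metis le_less_trans mult_less_cancel1)
  ultimately have "k \<in> Msmooth l" by (rule less_pr_Suc_in_Msmooth)
  then show ?thesis using mult_Msmooth_in_Lset assms(1,5) k by blast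
qed

lemma primitive_subset: "primitive B \<Longrightarrow> A \<subseteq> B \<Longrightarrow> primitive A"
  unfolding primitive_def by blast

lemma primitive_upper_half: "primitive {n<..2*n}"
  unfolding primitive_def
proof safe
  fix a b assume ab: "a \<in> {n<..2*n}" "b \<in> {n<..2*n}" and "a dvd b"
  from \<open>a dvd b\<close> obtain k where k: "b = a * k" ..
  have "k = 1"
  proof (rule ccontr)
    assume "k \<noteq> 1"
    with k ab have "2 \<le> k" by (cases k) auto
    then have "a * 2 \<le> b" unfolding k by (rule mult_le_mono2)
    with ab show False by simp
  qed
  with k show "a = b" by simp
qed

lemma upper_half_mult_pr_gt:
  assumes "n < x"
  shows "2 * n < x * pr (l + 1)"
proof -
  have "2 * n < x * 2" using assms by simp
  also have "\<dots> \<le> x * pr (l + 1)" using prime_pr prime_ge_2_nat by simp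
  finally show ?thesis .
qed

lemma power_two_mult_in_upper_half:
  fixes x n :: nat
  assumes "0 < x" "x \<le> 2 * n"
  shows "\<exists>j. x * 2 ^ j \<in> {n<..2*n}"
  using assms
proof (induction "2 * n - x" arbitrary: x rule: less_induct)
  case less
  show ?case
  proof (cases "n < x")
    case True
    with less.prems show ?thesis by (intro exI[of _ 0]) simp
  next
    case False
    with less.prems have "2 * n - 2 * x < 2 * n - x" "0 < 2 * x" "2 * x \<le> 2 * n" by auto
    then obtain j where "2 * x * 2 ^ j \<in> {n<..2*n}" by (rule less.hyps[elim_format]) blast
    then show ?thesis by (intro exI[of _ "Suc j"]) (simp add: ac_simps)
  qed
qed

lemma primitive_power_two_mult_inj:
  assumes "primitive A" "x \<in> A" "y \<in> A" "x * 2 ^ i = y * (2::nat) ^ j"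
  shows "x = y"
  using assms
proof (induction i j arbitrary: x y rule: linorder_wlog)
  case (le i j)
  then have "y * 2 ^ j = y * 2 ^ (j - i) * 2 ^ i" by (simp add: mult.assoc flip: power_add)
  with le.prems(4) have "y dvd x" by simp
  with le.prems(1-3) show ?case unfolding primitive_def by blast
next
  case (sym i j)
  then show ?case by metis
qed

lemma card_max_antichain_Lset:
  assumes "l \<ge> 1" "t \<in> Tset n l" "max_antichain (Lset n l t) B"
  shows "card B = card (Lset n l t \<inter> {n<..2*n})"
proof (rule antisym)
  have B: "B \<subseteq> Lset n l t" "primitive B" using assms(3) unfolding max_antichain_def by auto
  define j where "j x = (SOME j. x * 2 ^ j \<in> {n<..2*n})" for x
  have "x * 2 ^ j x \<in> Lset n l t \<inter> {n<..2*n}" if "x \<in> B" for x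
  proof -
    have x: "x \<in> Lset n l t" using that B(1) by blast
    then have "\<exists>j. x * 2 ^ j \<in> {n<..2*n}"
      using Lset_subset[OF assms(2)] power_two_mult_in_upper_half by auto
    then have "x * 2 ^ j x \<in> {n<..2*n}" unfolding j_def by (rule someI_ex)
    moreover from this have "x * 2 ^ j x \<in> Lset n l t"
      using mult_Msmooth_in_Lset[OF x power_two_in_Msmooth[OF assms(1)]] by simp
    ultimately show ?thesis by blast
  qed
  moreover have "inj_on (\<lambda>x. x * 2 ^ j x) B"
    using primitive_power_two_mult_inj[OF B(2)] by (intro inj_onI) blast
  ultimately show "card B \<le> card (Lset n l t \<inter> {n<..2*n})"
    using finite_Lset by (intro card_inj_on_le) auto
next
  have "primitive (Lset n l t \<inter> {n<..2*n})"
    using primitive_subset[OF primitive_upper_half] by blast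
  then show "card (Lset n l t \<inter> {n<..2*n}) \<le> card B"
    using assms(3) unfolding max_antichain_def by blast
qed

lemma card_Union_max_antichains:
  assumes "l \<ge> 1" "T' \<subseteq> Tset n l" "\<forall>t\<in>T'. max_antichain (Lset n l t) (B t)"
  shows "card (\<Union>t\<in>T'. B t) = card ({n<..2*n} \<inter> (\<Union>t\<in>T'. Lset n l t))"
proof -
  have fin: "finite T'" using assms(2) finite_Tset by (rule finite_subset)
  have B: "B t \<subseteq> Lset n l t" if "t \<in> T'" for t
    using assms(3) that unfolding max_antichain_def by blast
  have disj: "Lset n l t \<inter> Lset n l t' = {}" if "t \<in> T'" "t' \<in> T'" "t \<noteq> t'" for t t'
    using Lset_disjoint assms(2) that by blast
  have "card (\<Union>t\<in>T'. B t) = (\<Sum>t\<in>T'. card (B t))"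
  proof (rule card_UN_disjoint[OF fin])
    show "\<forall>t\<in>T'. finite (B t)" using B finite_Lset finite_subset by blast
    show "\<forall>t\<in>T'. \<forall>t'\<in>T'. t \<noteq> t' \<longrightarrow> B t \<inter> B t' = {}" using B disj by blast
  qed
  also have "\<dots> = (\<Sum>t\<in>T'. card (Lset n l t \<inter> {n<..2*n}))"
    using card_max_antichain_Lset assms by (intro sum.cong) auto
  also have "\<dots> = card (\<Union>t\<in>T'. Lset n l t \<inter> {n<..2*n})"
    using fin disj finite_Lset by (intro card_UN_disjoint[symmetric]) auto
  finally show ?thesis by (simp add: Int_UN_distrib Int_commute)
qed

lemma card_extension:
  assumes "l \<ge> 1" "T' \<subseteq> Tset n l" "\<forall>t\<in>T'. max_antichain (Lset n l t) (B t)"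
  shows "card ((\<Union>t\<in>T'. B t) \<union> ({n<..2*n} - (\<Union>t\<in>T'. Lset n l t))) = n"
proof -
  let ?U = "\<Union>t\<in>T'. Lset n l t"
  have "finite T'" using assms(2) finite_Tset by (rule finite_subset)
  then have "finite ?U" using finite_Lset by blast
  moreover have "(\<Union>t\<in>T'. B t) \<subseteq> ?U"
    using assms(3) unfolding max_antichain_def by (intro UN_mono) auto
  ultimately have "card ((\<Union>t\<in>T'. B t) \<union> ({n<..2*n} - ?U))
      = card (\<Union>t\<in>T'. B t) + card ({n<..2*n} - ?U)"
    by (intro card_Un_disjoint) (auto dest: finite_subset)
  also have "card (\<Union>t\<in>T'. B t) = card ({n<..2*n} \<inter> ?U)"
    by (rule card_Union_max_antichains[OF assms])
  also have "card ({n<..2*n} \<inter> ?U) + card ({n<..2*n} - ?U) = n"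
    by (simp flip: card_Int_Diff)
  finally show ?thesis .
qed

lemma primitive_extension:
  assumes "T' \<subseteq> Tset n l" "\<forall>t\<in>T'. max_antichain (Lset n l t) (B t)"
    and "\<forall>x\<in>(\<Union>t\<in>T'. B t). 2 * n < x * pr (l + 1) \<and> x \<le> 2 * n"
  shows "primitive ((\<Union>t\<in>T'. B t) \<union> ({n<..2*n} - (\<Union>t\<in>T'. Lset n l t)))"
    (is "primitive (?Astar \<union> ?rest)")
  unfolding primitive_def
proof (intro ballI impI)
  have B: "B t \<subseteq> Lset n l t" "primitive (B t)" if "t \<in> T'" for t
    using assms(2) that unfolding max_antichain_def by auto
  fix a b assume a: "a \<in> ?Astar \<union> ?rest" and b: "b \<in> ?Astar \<union> ?rest" and "a dvd b"
  have "0 < b"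
  proof (rule gr0I)
    assume "b = 0"
    with b have "0 \<in> ?Astar" by auto
    with assms(3) have "2 * n < 0 * pr (l + 1)" by blast
    then show False by simp
  qed
  have "b \<le> 2 * n" using b assms(3) by auto
  show "a = b"
  proof (cases "a \<in> ?Astar")
    case True
    then obtain t where t: "t \<in> T'" "a \<in> B t" by blast
    from True assms(3) have "2 * n < a * pr (l + 1)" by blast
    with t B(1) have "b \<in> Lset n l t"
      using dvd_in_Lset \<open>a dvd b\<close> \<open>0 < b\<close> \<open>b \<le> 2 * n\<close> by blast
    with b t(1) have "b \<in> ?Astar" by blast
    then obtain t' where t': "t' \<in> T'" "b \<in> B t'" by blast
    have "t = t'"
    proof (rule ccontr)
      assume "t \<noteq> t'"
      with t(1) t'(1) assms(1) have "Lset n l t \<inter> Lset n l t' = {}"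
        by (intro Lset_disjoint) auto
      with \<open>b \<in> Lset n l t\<close> B(1)[OF t'(1)] t'(2) show False by blast
    qed
    then show ?thesis using B(2) t t' \<open>a dvd b\<close> unfolding primitive_def by blast
  next
    case False
    then have "a \<in> {n<..2*n}" using a by blast
    moreover have "a \<le> b" using \<open>a dvd b\<close> \<open>0 < b\<close> by (rule dvd_imp_le)
    ultimately have "b \<in> {n<..2*n}" using \<open>b \<le> 2 * n\<close> by simp
    then show ?thesis
      using primitive_upper_half \<open>a \<in> {n<..2*n}\<close> \<open>a dvd b\<close> unfolding primitive_def by blast
  qed
qed

theorem claim1:
  fixes n l :: nat and Tstar Astar :: "nat set" and At :: "nat \<Rightarrow> nat set"
  assumes "l \<ge> 1"
    and "Tstar \<subseteq> Tset n l"
    and "\<forall>t\<in>Tstar. max_antichain (Lset n l t) (At t)"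
    and "Astar = (\<Union>t\<in>Tstar. At t)"
    and "\<forall>x\<in>Astar. real (2 * n) / real (pr (l + 1)) < real x \<and> x \<le> 2 * n"
  shows "\<exists>A. primitive A \<and> card A = n \<and> Astar \<subseteq> A \<and>
           (\<forall>x\<in>A. real (2 * n) / real (pr (l + 1)) < real x \<and> x \<le> 2 * n) \<and>
           A \<inter> (\<Union>t\<in>Tstar. Lset n l t) = Astar"
proof -
  define U where "U = (\<Union>t\<in>Tstar. Lset n l t)"
  define A where "A = Astar \<union> ({n<..2*n} - U)"
  have q: "0 < pr (l + 1)" using prime_pr prime_gt_0_nat by blast
  have "\<forall>x\<in>Astar. 2 * n < x * pr (l + 1) \<and> x \<le> 2 * n"
    using assms(5) of_nat_divide_less_iff[OF q] by blast
  then have "primitive A" unfolding A_def U_def assms(4) by (rule primitive_extension[OF assms(2,3)])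
  moreover have "card A = n"
    unfolding A_def U_def assms(4) by (rule card_extension[OF assms(1-3)])
  moreover have "\<forall>x\<in>A. real (2 * n) / real (pr (l + 1)) < real x \<and> x \<le> 2 * n"
  proof
    fix x assume "x \<in> A"
    then consider "x \<in> Astar" | "x \<in> {n<..2*n}" unfolding A_def by blast
    then show "real (2 * n) / real (pr (l + 1)) < real x \<and> x \<le> 2 * n"
    proof cases
      case 2
      then show ?thesis
        by (subst of_nat_divide_less_iff[OF q]) (use upper_half_mult_pr_gt[of n x l] in simp)
    qed (use assms(5) in blast)
  qed
  moreover have "Astar \<subseteq> U"
    using assms(3) unfolding assms(4) U_def max_antichain_def by (intro UN_mono) auto
  then have "Astar \<subseteq> A" "A \<inter> U = Astar" unfolding A_def by blast+
  ultimately show ?thesis unfolding U_def by blast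
qed

end
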